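(* Let $\pi\colon\mathsf{States}\to\mathbb{R}_{\ge0}$ be a potential function. For every program $C$, every $X\in\mathbb{A}_\pi$ and every constant runtime $c\in\mathbb{T}$ (i.e. $c$ is a constant function $\mathsf{States}\to[0,\infty]$), $$\mathsf{aert}_\pi[\![C]\!](X+c)\;\preceq\;\mathsf{aert}_\pi[\![C]\!](X)+c .$$
   Context: States and programs. Fix a finite set $\mathrm{Vars}$ of variables; values are $\mathbb{N}$, locations are $\mathbb{N}_{>0}$. A stack is $s\colon \mathrm{Vars}\to\mathbb{N}$; a heap is a partial map $h$ from a finite set $\mathrm{dom}(h)\subseteq\mathbb{N}_{>0}$ to $\mathbb{N}$. $h_1\perp h_2$ means disjoint domains; then $h_1\star h_2$ is their union; $h_\emptyset$ is the empty heap. $\mathsf{States}$ is the set of pairs $(s,h)$. $s(e)$ is the value of a (heap-independent) arithmetic expression $e$ under $s$, $s\models\varphi$ means the Boolean expression $\varphi$ holds under $s$, $s[x\mapsto v]$ is the updated stack. Programs are generated by $C ::= \mathtt{tick}(e) \mid x:=e \mid x:=\mathtt{alloc}(e) \mid \langle e\rangle:=e' \mid x:=\langle e\rangle \mid \mathtt{free}(e) \mid \{C\}[p]\{C\} \mid \mathtt{if}(\varphi)\{C\}\mathtt{else}\{C\} \mid C;C \mid \mathtt{while}(\varphi)\{C\}$, where $p$ is an expression with $s(p)\in[0,1]\cap\mathbb{Q}$ for all $s$. The statements other than tick, probabilistic choice, conditional, sequencing and loops are called atomic. Runtimes. $\mathbb{T}$ is the set of functions $\mathsf{States}\to[0,\infty]$,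 ordered pointwise by $\preceq$; arithmetic is pointwise with $0\cdot\infty=0$. $[\varphi]$ is the $0/1$-valued Iverson bracket. Truncated subtraction: $a\dot- b=\max(a-b,0)$, $\infty\dot- b=\infty$ for finite $b$, $a\dot-\infty=0$. $(f\oplus g)(s,h)=\min\{f(s,h_1)+g(s,h_2)\mid h=h_1\star h_2\}$; $(f \mathbin{-\!\!\ominus} g)(s,h)=\sup\{g(s,h\star h')\dot- f(s,h')\mid h'\perp h\}$; $(\inf y\colon f)(s,h)=\inf_{v\in\mathbb{N}} f(s[y\mapsto v],h)$, $(\sup y\colon f)(s,h)=\sup_{v\in\mathbb{N}}f(s[y\mapsto v],h)$; $f[x/e](s,h)=f(s[x\mapsto s(e)],h)$. $\mathsf{tm}(e)(s,h)=s(e)$ if $h=h_\emptyset$, else $\infty$; $[e\mapsto e'](s,h)=0$ if $\mathrm{dom}(h)=\{s(e)\}$ and $h(s(e))=s(e')$, else $\infty$; $[e\mapsto -](s,h)=0$ if $\mathrm{dom}(h)=\{s(e)\}$, else $\infty$; $\bigoplus_{i=1}^{e} f_i$ is the separating sum over $i=1,\dots,s(e)$ (empty one: $[\mathsf{emp}]$, which is $0$ if $h=h_\emptyset$, else $\infty$). $\mathsf{ert}[\![C]\!]\colon\mathbb{T}\to\mathbb{T}$ (with $v$ fresh): $\mathsf{ert}[\![\mathtt{tick}(e)]\!](f)=\mathsf{tm}(e)\oplus f$; $\mathsf{ert}[\![x:=e]\!](f)=f[x/e]$; $\mathsf{ert}[\![x:=\mathtt{alloc}(e)]\!](f)=\sup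 v\colon (\bigoplus_{i=1}^{e}[v+i-1\mapsto 0])\mathbin{-\!\!\ominus} f[x/v]$; $\mathsf{ert}[\![\langle e\rangle:=e']\!](f)=[e\mapsto-]\oplus([e\mapsto e']\mathbin{-\!\!\ominus} f)$; $\mathsf{ert}[\![x:=\langle e\rangle]\!](f)=\inf v\colon [e\mapsto v]\oplus([e\mapsto v]\mathbin{-\!\!\ominus} f[x/v])$; $\mathsf{ert}[\![\mathtt{free}(e)]\!](f)=[e\mapsto-]\oplus f$; $\mathsf{ert}[\![C_1;C_2]\!](f)=\mathsf{ert}[\![C_1]\!](\mathsf{ert}[\![C_2]\!](f))$; conditional: $[\varphi]\cdot\mathsf{ert}[\![C_1]\!](f)+[\neg\varphi]\cdot\mathsf{ert}[\![C_2]\!](f)$; probabilistic choice: $p\cdot\mathsf{ert}[\![C_1]\!](f)+(1-p)\cdot\mathsf{ert}[\![C_2]\!](f)$; $\mathsf{ert}[\![\mathtt{while}(\varphi)\{C\}]\!](f)=\mathrm{lfp}\, g.\ [\neg\varphi]\cdot f+[\varphi]\cdot\mathsf{ert}[\![C]\!](g)$. Amortized runtimes. A potential function is $\pi\colon\mathsf{States}\to\mathbb{R}_{\ge0}$. $\mathbb{A}_\pi=\{X\colon\mathsf{States}\to\mathbb{R}\cup\{\infty\}\mid -\pi\le X\}$, ordered pointwise (complete lattice, least element $-\pi$). $\mathsf{aert}_\pi[\![C]\!]\colon\mathbb{A}_\pi\to\mathbb{A}_\pi$: $\mathsf{aert}_\pi[\![\mathtt{tick}(e)]\!](X)=e+X$;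 for atomic $C$ other than tick, $\mathsf{aert}_\pi[\![C]\!](X)=\mathsf{ert}[\![C]\!](X+\pi)-\pi$; sequencing by composition; conditional $[\varphi]\cdot\mathsf{aert}_\pi[\![C_1]\!](X)+[\neg\varphi]\cdot\mathsf{aert}_\pi[\![C_2]\!](X)$; probabilistic choice $p\cdot\mathsf{aert}_\pi[\![C_1]\!](X)+(1-p)\cdot\mathsf{aert}_\pi[\![C_2]\!](X)$; $\mathsf{aert}_\pi[\![\mathtt{while}(\varphi)\{C'\}]\!](X)=\mathrm{lfp}\,Y.\ [\neg\varphi]\cdot X+[\varphi]\cdot\mathsf{aert}_\pi[\![C']\!](Y)$ in $(\mathbb{A}_\pi,\preceq)$. *)

theory Defs
  imports Complex_Main "HOL-Library.Extended_Nonnegative_Real" "HOL-Library.Extended_Real"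
begin

typedef heap = "{h :: nat \<Rightarrow> nat option. finite (dom h) \<and> 0 \<notin> dom h}"
  morphisms hmap Heap
  by (rule exI[of _ Map.empty]) auto

definition hdom :: "heap \<Rightarrow> nat set" where
  "hdom h = dom (hmap h)"

definition hdisj :: "heap \<Rightarrow> heap \<Rightarrow> bool" where
  "hdisj h1 h2 \<longleftrightarrow> hdom h1 \<inter> hdom h2 = {}"

definition hunion :: "heap \<Rightarrow> heap \<Rightarrow> heap" where
  "hunion h1 h2 = Heap (hmap h1 ++ hmap h2)"

definition hemp :: heap where
  "hemp = Heap Map.empty"

type_synonym 'v stack = "'v \<Rightarrow> nat"
type_synonym 'v state = "'v stack \<times> heap"
type_synonym 'v rt = "'v state \<Rightarrow> ennreal"
type_synonym 'v art = "'v state \<Rightarrow> ereal"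

text \<open>Expressions are heap-independent: arithmetic expressions are functions of the stack
  into nat, Boolean expressions functions into bool, probabilities functions into rat.\<close>
datatype 'v prog =
    Tick "'v stack \<Rightarrow> nat"
  | Assign 'v "'v stack \<Rightarrow> nat"
  | Alloc 'v "'v stack \<Rightarrow> nat"
  | Store "'v stack \<Rightarrow> nat" "'v stack \<Rightarrow> nat"
  | Load 'v "'v stack \<Rightarrow> nat"
  | Free "'v stack \<Rightarrow> nat"
  | PChoice "'v prog" "'v stack \<Rightarrow> rat" "'v prog"
  | If "'v stack \<Rightarrow> bool" "'v prog" "'v prog"
  | Seq "'v prog" "'v prog"
  | While "'v stack \<Rightarrow> bool" "'v prog"

primrec wf_prog :: "'v prog \<Rightarrow> bool" where
  "wf_prog (Tick e) = True"
| "wf_prog (Assign x e) = True"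
| "wf_prog (Alloc x e) = True"
| "wf_prog (Store e e') = True"
| "wf_prog (Load x e) = True"
| "wf_prog (Free e) = True"
| "wf_prog (PChoice C1 p C2) = ((\<forall>s. 0 \<le> p s \<and> p s \<le> 1) \<and> wf_prog C1 \<and> wf_prog C2)"
| "wf_prog (If b C1 C2) = (wf_prog C1 \<and> wf_prog C2)"
| "wf_prog (Seq C1 C2) = (wf_prog C1 \<and> wf_prog C2)"
| "wf_prog (While b C) = wf_prog C"

text \<open>Truncated subtraction on [0,\<infinity>]: a - \<infinity> = 0, \<infinity> - b = \<infinity> for finite b.\<close>
definition tsub :: "ennreal \<Rightarrow> ennreal \<Rightarrow> ennreal" where
  "tsub a b = (if b = top then 0 else if a = top then top else a - b)"

definition sepsum :: "'v rt \<Rightarrow> 'v rt \<Rightarrow> 'v rt" where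
  "sepsum f g = (\<lambda>(s, h). INF p \<in> {(h1, h2). hdisj h1 h2 \<and> hunion h1 h2 = h}.
                    f (s, fst p) + g (s, snd p))"

definition sepimp :: "'v rt \<Rightarrow> 'v rt \<Rightarrow> 'v rt" where
  "sepimp f g = (\<lambda>(s, h). SUP h' \<in> {h'. hdisj h' h}. tsub (g (s, hunion h h')) (f (s, h')))"

definition tm :: "('v stack \<Rightarrow> nat) \<Rightarrow> 'v rt" where
  "tm e = (\<lambda>(s, h). if h = hemp then ennreal (real (e s)) else top)"

definition emp :: "'v rt" where
  "emp = (\<lambda>(s, h). if h = hemp then 0 else top)"

definition ptv :: "nat \<Rightarrow> nat \<Rightarrow> 'v rt" where
  "ptv l v = (\<lambda>(s, h). if hdom h = {l} \<and> hmap h l = Some v then 0 else top)"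

definition ptany :: "nat \<Rightarrow> 'v rt" where
  "ptany l = (\<lambda>(s, h). if hdom h = {l} then 0 else top)"

primrec bigsep :: "nat \<Rightarrow> (nat \<Rightarrow> 'v rt) \<Rightarrow> 'v rt" where
  "bigsep 0 F = emp"
| "bigsep (Suc n) F = sepsum (bigsep n F) (F (Suc n))"

primrec ert :: "'v prog \<Rightarrow> 'v rt \<Rightarrow> 'v rt" where
  "ert (Tick e) f = sepsum (tm e) f"
| "ert (Assign x e) f = (\<lambda>(s, h). f (s(x := e s), h))"
| "ert (Alloc x e) f = (\<lambda>(s, h). SUP v. sepimp (bigsep (e s) (\<lambda>i. ptv (v + i - 1) 0))
                                            (\<lambda>(s', h'). f (s'(x := v), h')) (s, h))"
| "ert (Store e e') f = sepsum (\<lambda>(s, h). ptany (e s) (s, h))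
                               (sepimp (\<lambda>(s, h). ptv (e s) (e' s) (s, h)) f)"
| "ert (Load x e) f = (\<lambda>(s, h). INF v. sepsum (\<lambda>(s', h'). ptv (e s') v (s', h'))
                         (sepimp (\<lambda>(s', h'). ptv (e s') v (s', h'))
                                 (\<lambda>(s', h'). f (s'(x := v), h'))) (s, h))"
| "ert (Free e) f = sepsum (\<lambda>(s, h). ptany (e s) (s, h)) f"
| "ert (PChoice C1 p C2) f = (\<lambda>\<sigma>. ennreal (real_of_rat (p (fst \<sigma>))) * ert C1 f \<sigma>
                                 + ennreal (1 - real_of_rat (p (fst \<sigma>))) * ert C2 f \<sigma>)"
| "ert (If b C1 C2) f = (\<lambda>\<sigma>. if b (fst \<sigma>) then ert C1 f \<sigma> else ert C2 f \<sigma>)"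
| "ert (Seq C1 C2) f = ert C1 (ert C2 f)"
| "ert (While b C) f = lfp (\<lambda>g \<sigma>. if b (fst \<sigma>) then ert C g \<sigma> else f \<sigma>)"

text \<open>Least fixed point in the complete lattice A_pi = {X. -pi \<le> X} (Knaster-Tarski).\<close>
definition lfpA :: "('v state \<Rightarrow> real) \<Rightarrow> ('v art \<Rightarrow> 'v art) \<Rightarrow> 'v art" where
  "lfpA \<pi> F = Inf {Y. (\<forall>\<sigma>. - ereal (\<pi> \<sigma>) \<le> Y \<sigma>) \<and> F Y \<le> Y}"

definition lift_atomic :: "('v state \<Rightarrow> real) \<Rightarrow> ('v rt \<Rightarrow> 'v rt) \<Rightarrow> 'v art \<Rightarrow> 'v art" where
  "lift_atomic \<pi> T X = (\<lambda>\<sigma>. enn2ereal (T (\<lambda>\<sigma>'. e2ennreal (X \<sigma>' + ereal (\<pi> \<sigma>'))) \<sigma>)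
                              - ereal (\<pi> \<sigma>))"

primrec aert :: "('v state \<Rightarrow> real) \<Rightarrow> 'v prog \<Rightarrow> 'v art \<Rightarrow> 'v art" where
  "aert \<pi> (Tick e) X = (\<lambda>\<sigma>. ereal (real (e (fst \<sigma>))) + X \<sigma>)"
| "aert \<pi> (Assign x e) X = lift_atomic \<pi> (ert (Assign x e)) X"
| "aert \<pi> (Alloc x e) X = lift_atomic \<pi> (ert (Alloc x e)) X"
| "aert \<pi> (Store e e') X = lift_atomic \<pi> (ert (Store e e')) X"
| "aert \<pi> (Load x e) X = lift_atomic \<pi> (ert (Load x e)) X"
| "aert \<pi> (Free e) X = lift_atomic \<pi> (ert (Free e)) X"
| "aert \<pi> (PChoice C1 p C2) X = (\<lambda>\<sigma>. ereal (real_of_rat (p (fst \<sigma>))) * aert \<pi> C1 X \<sigma>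
                                  + ereal (1 - real_of_rat (p (fst \<sigma>))) * aert \<pi> C2 X \<sigma>)"
| "aert \<pi> (If b C1 C2) X = (\<lambda>\<sigma>. if b (fst \<sigma>) then aert \<pi> C1 X \<sigma> else aert \<pi> C2 X \<sigma>)"
| "aert \<pi> (Seq C1 C2) X = aert \<pi> C1 (aert \<pi> C2 X)"
| "aert \<pi> (While b C) X = lfpA \<pi> (\<lambda>Y \<sigma>. if b (fst \<sigma>) then aert \<pi> C Y \<sigma> else X \<sigma>)"

end

theory Submission
  imports Defs
begin

(* Every atomic ert is subadditive with respect to adding a
   constant c: the separating sum is an infimum over heap splittings and the magic wand a
   supremum of truncated differences, and adding c commutes with both up to \<le>. This survives
   the lifting X \<mapsto> ert C (X + \<pi>) - \<pi> because X + \<pi> \<ge> 0 on A_\<pi>. A probabilistic choice is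
   a convex combination, so c passes through with total weight p + (1 - p) = 1. For a loop, let
   L be the least fixed point of its functional for X; the induction hypothesis at L makes L + c
   a prefixed point of the functional for X + c, so Park induction bounds the least fixed point
   of the latter by L + c. *)

lemma ennreal_INF_add_const:
  fixes f :: "'a \<Rightarrow> ennreal"
  shows "(INF i\<in>I. f i + c) = (INF i\<in>I. f i) + c"
proof (cases "I = {}")
  case False
  then show ?thesis
    using continuous_at_Inf_mono[of "\<lambda>x. x + c" "f ` I"]
      continuous_add[of "at_right (Inf (f ` I))" "\<lambda>x. x" "\<lambda>x. c"]
    by (auto simp: mono_def image_comp)
qed simp

lemma tsub_mono_left: "a \<le> a' \<Longrightarrow> tsub a b \<le> tsub a' b"
  unfolding tsub_def by (auto intro: ennreal_minus_mono simp: top_unique)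

lemma tsub_add_le: "tsub (a + c) b \<le> tsub a b + c"
  using add_diff_le_ennreal[of c a b] unfolding tsub_def by (auto simp: add.commute)

lemma rat_prob_bounds:
  assumes "0 \<le> p" "p \<le> (1::rat)"
  shows "0 \<le> real_of_rat p" "real_of_rat p \<le> 1"
  using assms by (metis of_rat_0 of_rat_less_eq, metis of_rat_1 of_rat_less_eq)

definition const_subadditive :: "(('a \<Rightarrow> ennreal) \<Rightarrow> ('b \<Rightarrow> ennreal)) \<Rightarrow> bool" where
  "const_subadditive T \<longleftrightarrow> (\<forall>f c. T (\<lambda>\<sigma>. f \<sigma> + c) \<le> (\<lambda>\<sigma>. T f \<sigma> + c))"

lemma const_subadditiveI:
  "(\<And>f c \<sigma>. T (\<lambda>\<sigma>. f \<sigma> + c) \<sigma> \<le> T f \<sigma> + c) \<Longrightarrow> const_subadditive T"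
  unfolding const_subadditive_def by (simp add: le_fun_def)

lemma const_subadditiveD:
  "const_subadditive T \<Longrightarrow> T (\<lambda>\<sigma>. f \<sigma> + c) \<sigma> \<le> T f \<sigma> + c"
  unfolding const_subadditive_def by (simp add: le_fun_def)

lemma const_subadditive_comp:
  assumes "mono T" "const_subadditive T" "const_subadditive S"
  shows "const_subadditive (T \<circ> S)"
proof (rule const_subadditiveI)
  fix f c \<sigma>
  have "T (S (\<lambda>\<sigma>. f \<sigma> + c)) \<le> T (\<lambda>\<sigma>. S f \<sigma> + c)"
    using assms(3) by (intro monoD[OF assms(1)] le_funI const_subadditiveD)
  then have "T (S (\<lambda>\<sigma>. f \<sigma> + c)) \<sigma> \<le> T (\<lambda>\<sigma>. S f \<sigma> + c) \<sigma>"
    by (rule le_funD)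
  also have "\<dots> \<le> T (S f) \<sigma> + c"
    using assms(2) by (rule const_subadditiveD)
  finally show "(T \<circ> S) (\<lambda>\<sigma>. f \<sigma> + c) \<sigma> \<le> (T \<circ> S) f \<sigma> + c"
    by simp
qed

lemma mono_sepsum: "mono (sepsum g)"
  unfolding sepsum_def by (auto intro!: monoI INF_mono' add_left_mono simp: le_fun_def)

lemma const_subadditive_sepsum: "const_subadditive (sepsum g)"
proof (rule const_subadditiveI, clarify)
  fix f c s h
  show "sepsum g (\<lambda>\<sigma>. f \<sigma> + c) (s, h) \<le> sepsum g f (s, h) + c"
    unfolding sepsum_def
    using ennreal_INF_add_const[of "\<lambda>p. g (s, fst p) + f (s, snd p)"] by (simp add: add.assoc)
qed

lemma mono_sepimp: "mono (sepimp g)"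
  unfolding sepimp_def by (auto intro!: monoI SUP_mono' tsub_mono_left simp: le_fun_def)

lemma const_subadditive_sepimp: "const_subadditive (sepimp g)"
proof (rule const_subadditiveI, clarify)
  fix f c s h
  have "tsub (f (s, hunion h h') + c) (g (s, h')) \<le> sepimp g f (s, h) + c" if "hdisj h' h" for h'
  proof -
    have "tsub (f (s, hunion h h') + c) (g (s, h')) \<le> tsub (f (s, hunion h h')) (g (s, h')) + c"
      by (rule tsub_add_le)
    also have "\<dots> \<le> sepimp g f (s, h) + c"
      using that unfolding sepimp_def by (auto intro!: add_right_mono SUP_upper)
    finally show ?thesis .
  qed
  then show "sepimp g (\<lambda>\<sigma>. f \<sigma> + c) (s, h) \<le> sepimp g f (s, h) + c"
    by (subst sepimp_def) (auto intro: SUP_least)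
qed

lemma mono_ert: "mono (ert C)"
proof (induction C)
  case (Tick e)
  show ?case by (simp add: mono_sepsum)
next
  case (Assign x e)
  show ?case by (rule monoI) (auto simp: le_fun_def)
next
  case (Alloc x e)
  show ?case
  proof (rule monoI, rule le_funI, clarify)
    fix f g :: "'a rt" and s h assume "f \<le> g"
    then show "ert (Alloc x e) f (s, h) \<le> ert (Alloc x e) g (s, h)"
      by (auto intro!: SUP_mono' le_funD[OF monoD[OF mono_sepimp]] simp: le_fun_def)
  qed
next
  case (Store e e')
  show ?case by (auto intro!: monoI monoD[OF mono_sepsum] monoD[OF mono_sepimp])
next
  case (Load x e)
  show ?case
  proof (rule monoI, rule le_funI, clarify)
    fix f g :: "'a rt" and s h assume "f \<le> g"
    then show "ert (Load x e) f (s, h) \<le> ert (Load x e) g (s, h)"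
      by (auto intro!: INF_mono' le_funD[OF monoD[OF mono_sepsum]] monoD[OF mono_sepimp]
          simp: le_fun_def)
  qed
next
  case (Free e)
  show ?case by (simp add: mono_sepsum)
next
  case (PChoice C1 p C2)
  show ?case
  proof (rule monoI, rule le_funI)
    fix f g :: "'a rt" and \<sigma> assume "f \<le> g"
    then have "ert C1 f \<sigma> \<le> ert C1 g \<sigma>" "ert C2 f \<sigma> \<le> ert C2 g \<sigma>"
      using PChoice.IH by (auto dest: monoD le_funD)
    then show "ert (PChoice C1 p C2) f \<sigma> \<le> ert (PChoice C1 p C2) g \<sigma>"
      by (auto intro!: add_mono mult_left_mono)
  qed
next
  case (If b C1 C2)
  show ?case
  proof (rule monoI, rule le_funI)
    fix f g :: "'a rt" and \<sigma> assume "f \<le> g"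
    then have "ert C1 f \<sigma> \<le> ert C1 g \<sigma>" "ert C2 f \<sigma> \<le> ert C2 g \<sigma>"
      using If.IH by (auto dest: monoD le_funD)
    then show "ert (If b C1 C2) f \<sigma> \<le> ert (If b C1 C2) g \<sigma>"
      by simp
  qed
next
  case (Seq C1 C2)
  then show ?case by (auto intro!: monoI dest: monoD)
next
  case (While b C)
  show ?case
    by (intro monoI, simp only: ert.simps, rule lfp_mono) (auto simp: le_fun_def)
qed

lemma const_subadditive_ert_Tick: "const_subadditive (ert (Tick e))"
  by (rule const_subadditiveI) (simp add: const_subadditiveD[OF const_subadditive_sepsum])

lemma const_subadditive_ert_Assign: "const_subadditive (ert (Assign x e))"
  by (rule const_subadditiveI) auto

lemma const_subadditive_ert_Alloc: "const_subadditive (ert (Alloc x e))"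
proof (rule const_subadditiveI, clarify)
  fix f :: "'a rt" and c s h
  let ?B = "\<lambda>v. bigsep (e s) (\<lambda>i. ptv (v + i - 1) 0) :: 'a rt"
  let ?f = "\<lambda>v (s', h'). f (s'(x := v), h')"
  have "ert (Alloc x e) (\<lambda>\<sigma>. f \<sigma> + c) (s, h)
      = (SUP v. sepimp (?B v) (\<lambda>\<sigma>. ?f v \<sigma> + c) (s, h))"
    by (simp add: case_prod_beta')
  also have "\<dots> \<le> (SUP v. sepimp (?B v) (?f v) (s, h) + c)"
    by (intro SUP_mono' const_subadditiveD[OF const_subadditive_sepimp])
  also have "\<dots> \<le> ert (Alloc x e) f (s, h) + c"
    by (auto intro!: SUP_least add_right_mono SUP_upper)
  finally show "ert (Alloc x e) (\<lambda>\<sigma>. f \<sigma> + c) (s, h) \<le> ert (Alloc x e) f (s, h) + c" .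
qed

lemma const_subadditive_ert_Store: "const_subadditive (ert (Store e e'))"
proof -
  have "ert (Store e e')
      = sepsum (\<lambda>(s, h). ptany (e s) (s, h)) \<circ> sepimp (\<lambda>(s, h). ptv (e s) (e' s) (s, h))"
    by (simp add: fun_eq_iff)
  then show ?thesis
    by (simp add: const_subadditive_comp mono_sepsum const_subadditive_sepsum const_subadditive_sepimp)
qed

lemma const_subadditive_ert_Load: "const_subadditive (ert (Load x e))"
proof (rule const_subadditiveI, clarify)
  fix f :: "'a rt" and c s h
  let ?A = "\<lambda>v. (\<lambda>(s', h'). ptv (e s') v (s', h')) :: 'a rt"
  let ?T = "\<lambda>v. sepsum (?A v) \<circ> sepimp (?A v)"
  let ?f = "\<lambda>v (s', h'). f (s'(x := v), h')"
  have "ert (Load x e) (\<lambda>\<sigma>. f \<sigma> + c) (s, h)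
      = (INF v. ?T v (\<lambda>\<sigma>. ?f v \<sigma> + c) (s, h))"
    by (simp add: case_prod_beta')
  also have "\<dots> \<le> (INF v. ?T v (?f v) (s, h) + c)"
  proof (rule INF_mono')
    fix v
    have "const_subadditive (?T v)"
      by (intro const_subadditive_comp mono_sepsum const_subadditive_sepsum const_subadditive_sepimp)
    then show "?T v (\<lambda>\<sigma>. ?f v \<sigma> + c) (s, h) \<le> ?T v (?f v) (s, h) + c"
      by (rule const_subadditiveD)
  qed
  also have "\<dots> = ert (Load x e) f (s, h) + c"
    by (simp add: ennreal_INF_add_const)
  finally show "ert (Load x e) (\<lambda>\<sigma>. f \<sigma> + c) (s, h) \<le> ert (Load x e) f (s, h) + c" .
qed

lemma const_subadditive_ert_Free: "const_subadditive (ert (Free e))"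
  by (rule const_subadditiveI) (simp add: const_subadditiveD[OF const_subadditive_sepsum])

abbreviation amortized :: "('a \<Rightarrow> real) \<Rightarrow> ('a \<Rightarrow> ereal) \<Rightarrow> bool" where
  "amortized \<pi> X \<equiv> \<forall>\<sigma>. - ereal (\<pi> \<sigma>) \<le> X \<sigma>"

lemma e2ennreal_add_enn2ereal: "0 \<le> a \<Longrightarrow> e2ennreal (a + enn2ereal c) = e2ennreal a + c"
  by (metis e2ennreal_enn2ereal enn2ereal_e2ennreal plus_ennreal.rep_eq)

lemma ereal_add_diff_swap: "0 \<le> (a::ereal) \<Longrightarrow> 0 \<le> b \<Longrightarrow> a + b - ereal p = a - ereal p + b"
  by (cases a; cases b) auto

lemma mono_lift_atomic: "mono T \<Longrightarrow> mono (lift_atomic \<pi> T)"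
proof (intro monoI le_funI)
  fix X Y :: "'a state \<Rightarrow> ereal" and \<sigma> assume T: "mono T" and "X \<le> Y"
  then have "(\<lambda>\<sigma>'. e2ennreal (X \<sigma>' + ereal (\<pi> \<sigma>'))) \<le> (\<lambda>\<sigma>'. e2ennreal (Y \<sigma>' + ereal (\<pi> \<sigma>')))"
    by (auto simp: le_fun_def intro!: e2ennreal_mono add_right_mono)
  then have "T (\<lambda>\<sigma>'. e2ennreal (X \<sigma>' + ereal (\<pi> \<sigma>'))) \<sigma> \<le> T (\<lambda>\<sigma>'. e2ennreal (Y \<sigma>' + ereal (\<pi> \<sigma>'))) \<sigma>"
    by (rule le_funD[OF monoD[OF T]])
  then show "lift_atomic \<pi> T X \<sigma> \<le> lift_atomic \<pi> T Y \<sigma>"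
    unfolding lift_atomic_def by (intro ereal_minus_mono) (simp_all add: less_eq_ennreal.rep_eq)
qed

lemma amortized_lift_atomic: "amortized \<pi> (lift_atomic \<pi> T X)"
proof
  fix \<sigma>
  have "0 - ereal (\<pi> \<sigma>) \<le> enn2ereal (T (\<lambda>\<sigma>'. e2ennreal (X \<sigma>' + ereal (\<pi> \<sigma>'))) \<sigma>) - ereal (\<pi> \<sigma>)"
    by (rule ereal_minus_mono) auto
  then show "- ereal (\<pi> \<sigma>) \<le> lift_atomic \<pi> T X \<sigma>"
    unfolding lift_atomic_def by simp
qed

lemma lift_atomic_add_const:
  assumes T: "const_subadditive T" and X: "amortized \<pi> X"
  shows "lift_atomic \<pi> T (\<lambda>\<sigma>. X \<sigma> + enn2ereal c) \<le> (\<lambda>\<sigma>. lift_atomic \<pi> T X \<sigma> + enn2ereal c)"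
proof (rule le_funI)
  fix \<sigma>
  define f where "f = (\<lambda>\<sigma>'. e2ennreal (X \<sigma>' + ereal (\<pi> \<sigma>')))"
  have shift: "(\<lambda>\<sigma>'. e2ennreal (X \<sigma>' + enn2ereal c + ereal (\<pi> \<sigma>'))) = (\<lambda>\<sigma>'. f \<sigma>' + c)"
  proof
    fix \<sigma>'
    have "- ereal (\<pi> \<sigma>') \<le> X \<sigma>'"
      using X by blast
    then have "0 \<le> X \<sigma>' + ereal (\<pi> \<sigma>')"
      by (cases "X \<sigma>'") auto
    then show "e2ennreal (X \<sigma>' + enn2ereal c + ereal (\<pi> \<sigma>')) = f \<sigma>' + c"
      unfolding f_def by (metis e2ennreal_add_enn2ereal add.assoc add.commute)
  qed
  have "enn2ereal (T (\<lambda>\<sigma>'. f \<sigma>' + c) \<sigma>) \<le> enn2ereal (T f \<sigma>) + enn2ereal c"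
    using const_subadditiveD[OF T] by (simp add: less_eq_ennreal.rep_eq plus_ennreal.rep_eq)
  then have "enn2ereal (T (\<lambda>\<sigma>'. f \<sigma>' + c) \<sigma>) - ereal (\<pi> \<sigma>)
      \<le> enn2ereal (T f \<sigma>) + enn2ereal c - ereal (\<pi> \<sigma>)"
    by (intro ereal_minus_mono) auto
  also have "\<dots> = enn2ereal (T f \<sigma>) - ereal (\<pi> \<sigma>) + enn2ereal c"
    by (rule ereal_add_diff_swap) auto
  finally show "lift_atomic \<pi> T (\<lambda>\<sigma>. X \<sigma> + enn2ereal c) \<sigma> \<le> lift_atomic \<pi> T X \<sigma> + enn2ereal c"
    unfolding lift_atomic_def shift f_def .
qed

lemma lfpA_lowerbound: "amortized \<pi> Z \<Longrightarrow> F Z \<le> Z \<Longrightarrow> lfpA \<pi> F \<le> Z"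
  unfolding lfpA_def by (rule Inf_lower) simp

lemma amortized_lfpA: "amortized \<pi> (lfpA \<pi> F)"
  unfolding lfpA_def Inf_apply by (blast intro: INF_greatest)

lemma lfpA_unfold_le:
  assumes "mono F"
  shows "F (lfpA \<pi> F) \<le> lfpA \<pi> F"
  unfolding lfpA_def
proof (rule Inf_greatest)
  fix Y assume Y: "Y \<in> {Y. amortized \<pi> Y \<and> F Y \<le> Y}"
  then have "F (Inf {Y. amortized \<pi> Y \<and> F Y \<le> Y}) \<le> F Y"
    by (intro monoD[OF assms] Inf_lower)
  also have "\<dots> \<le> Y" using Y by simp
  finally show "F (Inf {Y. amortized \<pi> Y \<and> F Y \<le> Y}) \<le> Y" .
qed

lemma lfpA_mono: "(\<And>Y. F Y \<le> G Y) \<Longrightarrow> lfpA \<pi> F \<le> lfpA \<pi> G"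
  unfolding lfpA_def by (rule Inf_superset_mono) (auto intro: order_trans)

lemma ereal_convex_comb_ge:
  assumes "0 \<le> p" "p \<le> 1" "ereal m \<le> a" "ereal m \<le> b"
  shows "ereal m \<le> ereal p * a + ereal (1 - p) * b"
proof -
  have "ereal p * ereal m + ereal (1 - p) * ereal m \<le> ereal p * a + ereal (1 - p) * b"
    using assms by (intro add_mono ereal_mult_left_mono) auto
  moreover have "ereal p * ereal m + ereal (1 - p) * ereal m = ereal m"
    by (simp add: algebra_simps)
  ultimately show ?thesis by simp
qed

lemma ereal_convex_comb_add_const:
  assumes p: "0 \<le> p" "p \<le> 1" and ab: "a \<noteq> -\<infinity>" "b \<noteq> -\<infinity>" and "0 \<le> c"
  shows "ereal p * (a + c) + ereal (1 - p) * (b + c) \<le> ereal p * a + ereal (1 - p) * b + c"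
proof (cases c)
  case (real r)
  have distrib: "ereal q * (x + c) = ereal q * x + ereal (q * r)" if "0 \<le> q" "x \<noteq> -\<infinity>" for q x
    using that real by (cases x) (auto simp: ring_distribs)
  have "ereal p * (a + c) + ereal (1 - p) * (b + c)
      = (ereal p * a + ereal (p * r)) + (ereal (1 - p) * b + ereal ((1 - p) * r))"
    using distrib[of p a] distrib[of "1 - p" b] p ab by simp
  also have "\<dots> = ereal p * a + ereal (1 - p) * b + (ereal (p * r) + ereal ((1 - p) * r))"
    by (metis add.assoc add.left_commute)
  also have "ereal (p * r) + ereal ((1 - p) * r) = c"
    using real by (simp add: algebra_simps)
  finally show ?thesis by simp
next
  case PInf
  have "ereal p * a \<noteq> -\<infinity>" "ereal (1 - p) * b \<noteq> -\<infinity>"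
    using p ab by (cases a; cases b; simp)+
  then show ?thesis using PInf by simp
qed (use \<open>0 \<le> c\<close> in simp)

lemma amortized_aert:
  assumes "wf_prog C" "amortized \<pi> X"
  shows "amortized \<pi> (aert \<pi> C X)"
  using assms
proof (induction C arbitrary: X)
  case (Tick e)
  then show ?case by (auto intro: add_increasing)
next
  case (PChoice C1 p C2)
  then show ?case
    using rat_prob_bounds by (auto intro!: ereal_convex_comb_ge simp del: ereal_uminus_eq_iff)
next
  case (If b C1 C2)
  then show ?case by auto
next
  case (Seq C1 C2)
  then show ?case by simp
next
  case (While b C)
  show ?case by (simp only: aert.simps) (rule amortized_lfpA)
qed (simp_all only: aert.simps amortized_lift_atomic simp_thms)

lemma aert_mono:
  assumes "wf_prog C" "X \<le> Y"
  shows "aert \<pi> C X \<le> aert \<pi> C Y"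
  using assms
proof (induction C arbitrary: X Y)
  case (Tick e)
  then show ?case by (auto simp: le_fun_def intro: add_left_mono)
next
  case (PChoice C1 p C2)
  then show ?case
    using rat_prob_bounds
    by (auto simp: le_fun_def intro!: add_mono ereal_mult_left_mono)
next
  case (If b C1 C2)
  then show ?case by (auto simp: le_fun_def)
next
  case (Seq C1 C2)
  then show ?case by simp
next
  case (While b C)
  show ?case
    unfolding aert.simps by (rule lfpA_mono) (use While.prems(2) in \<open>auto simp: le_fun_def\<close>)
qed (simp_all add: monoD[OF mono_lift_atomic[OF mono_ert]])

lemma aert_PChoice_add_const:
  assumes wf: "wf_prog (PChoice C1 p C2)" and X: "amortized \<pi> X"
    and IH1: "aert \<pi> C1 (\<lambda>\<sigma>. X \<sigma> + enn2ereal c) \<le> (\<lambda>\<sigma>. aert \<pi> C1 X \<sigma> + enn2ereal c)"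
    and IH2: "aert \<pi> C2 (\<lambda>\<sigma>. X \<sigma> + enn2ereal c) \<le> (\<lambda>\<sigma>. aert \<pi> C2 X \<sigma> + enn2ereal c)"
  shows "aert \<pi> (PChoice C1 p C2) (\<lambda>\<sigma>. X \<sigma> + enn2ereal c)
    \<le> (\<lambda>\<sigma>. aert \<pi> (PChoice C1 p C2) X \<sigma> + enn2ereal c)"
proof (rule le_funI)
  fix \<sigma> :: "'a state"
  let ?p = "real_of_rat (p (fst \<sigma>))"
  have p: "0 \<le> ?p" "?p \<le> 1"
    using wf rat_prob_bounds by auto
  have "wf_prog C1" "wf_prog C2"
    using wf by simp_all
  then have "amortized \<pi> (aert \<pi> C1 X)" "amortized \<pi> (aert \<pi> C2 X)"
    using amortized_aert X by blast+
  then have "- ereal (\<pi> \<sigma>) \<le> aert \<pi> C1 X \<sigma>" "- ereal (\<pi> \<sigma>) \<le> aert \<pi> C2 X \<sigma>"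
    by blast+
  then have finite: "aert \<pi> C1 X \<sigma> \<noteq> -\<infinity>" "aert \<pi> C2 X \<sigma> \<noteq> -\<infinity>"
    by auto
  have "aert \<pi> (PChoice C1 p C2) (\<lambda>\<sigma>. X \<sigma> + enn2ereal c) \<sigma>
      \<le> ereal ?p * (aert \<pi> C1 X \<sigma> + enn2ereal c) + ereal (1 - ?p) * (aert \<pi> C2 X \<sigma> + enn2ereal c)"
    using p le_funD[OF IH1, of \<sigma>] le_funD[OF IH2, of \<sigma>] by (auto intro!: add_mono ereal_mult_left_mono)
  also have "\<dots> \<le> aert \<pi> (PChoice C1 p C2) X \<sigma> + enn2ereal c"
    using p finite by (simp add: ereal_convex_comb_add_const)
  finally show "aert \<pi> (PChoice C1 p C2) (\<lambda>\<sigma>. X \<sigma> + enn2ereal c) \<sigma>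
      \<le> aert \<pi> (PChoice C1 p C2) X \<sigma> + enn2ereal c" .
qed

lemma aert_While_add_const:
  assumes C: "wf_prog C"
    and IH: "\<And>Y. amortized \<pi> Y \<Longrightarrow>
      aert \<pi> C (\<lambda>\<sigma>. Y \<sigma> + enn2ereal c) \<le> (\<lambda>\<sigma>. aert \<pi> C Y \<sigma> + enn2ereal c)"
  shows "aert \<pi> (While b C) (\<lambda>\<sigma>. X \<sigma> + enn2ereal c)
    \<le> (\<lambda>\<sigma>. aert \<pi> (While b C) X \<sigma> + enn2ereal c)"
proof -
  define F where "F = (\<lambda>Y \<sigma>. if b (fst \<sigma>) then aert \<pi> C Y \<sigma> else X \<sigma>)"
  define G where "G = (\<lambda>Y \<sigma>. if b (fst \<sigma>) then aert \<pi> C Y \<sigma> else X \<sigma> + enn2ereal c)"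
  define L where "L = lfpA \<pi> F"
  have "mono F"
    unfolding F_def using aert_mono[OF C] by (auto intro!: monoI simp: le_fun_def)
  then have FL: "F L \<le> L"
    unfolding L_def by (rule lfpA_unfold_le)
  have L: "amortized \<pi> L"
    unfolding L_def by (rule amortized_lfpA)
  then have Lc: "amortized \<pi> (\<lambda>\<sigma>. L \<sigma> + enn2ereal c)"
    by (auto intro: add_increasing2)
  from IH[OF L] have "G (\<lambda>\<sigma>. L \<sigma> + enn2ereal c) \<le> (\<lambda>\<sigma>. F L \<sigma> + enn2ereal c)"
    unfolding F_def G_def by (auto simp: le_fun_def)
  also have "\<dots> \<le> (\<lambda>\<sigma>. L \<sigma> + enn2ereal c)"
    using FL by (auto simp: le_fun_def intro: add_right_mono)
  finally have "lfpA \<pi> G \<le> (\<lambda>\<sigma>. L \<sigma> + enn2ereal c)"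
    by (rule lfpA_lowerbound[OF Lc])
  then show ?thesis
    unfolding G_def L_def F_def by simp
qed

lemma aert_add_const:
  assumes "wf_prog C" "amortized \<pi> X"
  shows "aert \<pi> C (\<lambda>\<sigma>. X \<sigma> + enn2ereal c) \<le> (\<lambda>\<sigma>. aert \<pi> C X \<sigma> + enn2ereal c)"
  using assms
proof (induction C arbitrary: X)
  case (Tick e)
  show ?case by (simp add: le_fun_def add.assoc)
next
  case (PChoice C1 p C2)
  then show ?case
    by (intro aert_PChoice_add_const) simp_all
next
  case (If b C1 C2)
  then show ?case by (auto simp: le_fun_def)
next
  case (Seq C1 C2)
  have wf: "wf_prog C1" "wf_prog C2"
    using Seq.prems(1) by simp_all
  have "aert \<pi> C1 (aert \<pi> C2 (\<lambda>\<sigma>. X \<sigma> + enn2ereal c))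
      \<le> aert \<pi> C1 (\<lambda>\<sigma>. aert \<pi> C2 X \<sigma> + enn2ereal c)"
    using wf(1) Seq.IH(2)[OF wf(2) Seq.prems(2)] by (rule aert_mono)
  also have "\<dots> \<le> (\<lambda>\<sigma>. aert \<pi> C1 (aert \<pi> C2 X) \<sigma> + enn2ereal c)"
    by (rule Seq.IH(1)[OF wf(1) amortized_aert[OF wf(2) Seq.prems(2)]])
  finally show ?case by simp
next
  case (While b C)
  then show ?case
    by (intro aert_While_add_const) simp_all
qed (simp_all add: lift_atomic_add_const const_subadditive_ert_Assign const_subadditive_ert_Alloc
    const_subadditive_ert_Store const_subadditive_ert_Load const_subadditive_ert_Free)

theorem mainTheorem4:
  fixes \<pi> :: "('v::finite) state \<Rightarrow> real"
    and C :: "'v prog"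
    and X :: "'v state \<Rightarrow> ereal"
    and c :: ennreal
  assumes pot: "\<forall>\<sigma>. 0 \<le> \<pi> \<sigma>"
    and wf: "wf_prog C"
    and XA: "\<forall>\<sigma>. - ereal (\<pi> \<sigma>) \<le> X \<sigma>"
  shows "aert \<pi> C (\<lambda>\<sigma>. X \<sigma> + enn2ereal c) \<le> (\<lambda>\<sigma>. aert \<pi> C X \<sigma> + enn2ereal c)"
  using wf XA by (rule aert_add_const)

end
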